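(* Let $k\ge 1$ and let $\mathscr{G}_k$ be a simple $\upsilon$-reduction grammar; let $\Phi_k$ denote the set of regular productions of $\mathscr{G}_k$ with left-hand side $G_k$. Then the generating function $G_k(z)$, whose coefficient $[z^n]G_k(z)$ is the number of $\lambda\upsilon$-terms of size $n$ which $\upsilon$-normalise in exactly $k$ normal-order reduction steps, admits the closed form $$G_k(z) = \frac{1}{1 - z - 2 z L_\infty(z)} \sum_{G_k \to \gamma \in \Phi_k} G_\gamma(z),$$ where for each such $\gamma$ $$G_\gamma(z) = z^{\zeta(\gamma)}\, T(z)^{\tau(\gamma)}\, S(z)^{\sigma(\gamma)}\, N(z)^{\nu(\gamma)} \prod_{0\le i<k} G_i(z)^{\rho_i(\gamma)}$$ for some non-negative integers $\zeta(\gamma),\tau(\gamma),\sigma(\gamma),\nu(\gamma),\rho_i(\gamma)$ depending on $\gamma$.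
   Context: $\lambda\upsilon$-terms (de Bruijn notation) are generated by: terms $t ::= \underline{n} \mid \lambda t \mid t\,t \mid t[s]$; substitutions $s ::= t/ \mid \Uparrow(s) \mid\ \uparrow$; indices $\underline{n} ::= \underline{0} \mid \mathtt{S}\,\underline{n}$. Pure terms are those without closures $\cdot[\cdot]$. The $\upsilon$-rewriting rules are: $(a b)[s] \to a[s](b[s])$; $(\lambda a)[s] \to \lambda(a[\Uparrow(s)])$; $\underline{0}[a/] \to a$; $(\mathtt{S}\,\underline{n})[a/] \to \underline{n}$; $\underline{0}[\Uparrow(s)] \to \underline{0}$; $(\mathtt{S}\,\underline{n})[\Uparrow(s)] \to \underline{n}[s][\uparrow]$; $\underline{n}[\uparrow] \to \mathtt{S}\,\underline{n}$. A term normalises in $k$ steps if leftmost-outermost $\upsilon$-reduction reaches a $\upsilon$-normal form in exactly $k$ steps. Size: $|\underline{n}| = n+1$, $|\lambda a| = 1+|a|$, $|ab| = 1+|a|+|b|$, $|a[s]| = 1+|a|+|s|$, $|a/| = 1+|a|$, $|\Uparrow(s)| = 1+|s|$, $|\uparrow| = 1$. Generating functions (by size): $T(z)$ of all $\lambda\upsilon$-terms, $S(z)$ of substitutions, $N(z)$ of indices, $L_\infty(z)$ of pure terms (equivalently, terms normalising in $0$ steps), and $G_i(z)$ of terms normalising in exactly $i$ steps. Regular tree grammars over the ranked alphabet $\mathscr{F}$ of $\lambda\upsilon$ symbols (application, closure binary; $\lambda$, $\cdot/$, $\Uparrow$, $\mathtt{S}$ unary; $\uparrow,\underline{0}$ constants):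 productions $X\to\alpha$ with $\alpha$ a term over $\mathscr{F}$ with non-terminals as variables; $L(\alpha)$ is the set of derivable ground terms; a non-terminal is unambiguous if each ground term has at most one derivation from it; a production $X\to\alpha$ is self-referencing if $X$ occurs in $\alpha$, regular otherwise. $\Lambda$ is the grammar with productions $T \to N \mid \lambda T \mid T T \mid T[S]$, $S \to T/ \mid \Uparrow(S) \mid \uparrow$, $N \to \underline{0} \mid \mathtt{S} N$. A $\upsilon$-reduction grammar $\mathscr{G}_k$ has axiom $G_k$, non-terminals $\{T,S,N,G_0,\dots,G_k\}$, contains all productions of $\Lambda$, each $G_j$ ($0\le j\le k$) is unambiguous and $L(G_j)$ is the set of terms normalising in exactly $j$ steps. It is simple if its self-referencing productions are productions of $\Lambda$ or of the form $G_j \to \lambda G_j \mid G_0 G_j \mid G_j G_0$, and each regular production $G_j\to\alpha$ has $\alpha$ using only non-terminals among $T,S,N,G_0,\dots,G_{j-1}$. *)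

theory Defs
  imports "HOL-Computational_Algebra.Formal_Power_Series"
begin

text \<open>Terms over the ranked alphabet F with variables of type 'v:
  application, closure (binary); lambda, slash (a/), lift (double up-arrow), successor S (unary);
  shift (up-arrow), zero (constants).  Ground terms are those without FV.\<close>

datatype 'v ftree =
    FV 'v
  | FApp "'v ftree" "'v ftree"
  | FClos "'v ftree" "'v ftree"
  | FLam "'v ftree"
  | FSlash "'v ftree"
  | FLift "'v ftree"
  | FS "'v ftree"
  | FShift
  | FZero

datatype nt = NT | NS | NN | NG nat

primrec fsize :: "'v ftree \<Rightarrow> nat" where
  "fsize (FV v) = 0"
| "fsize (FApp a b) = 1 + fsize a + fsize b"
| "fsize (FClos a s) = 1 + fsize a + fsize s"
| "fsize (FLam a) = 1 + fsize a"
| "fsize (FSlash a) = 1 + fsize a"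
| "fsize (FLift s) = 1 + fsize s"
| "fsize (FS n) = 1 + fsize n"
| "fsize FShift = 1"
| "fsize FZero = 1"

primrec fjoin :: "'a ftree ftree \<Rightarrow> 'a ftree" where
  "fjoin (FV t) = t"
| "fjoin (FApp a b) = FApp (fjoin a) (fjoin b)"
| "fjoin (FClos a s) = FClos (fjoin a) (fjoin s)"
| "fjoin (FLam a) = FLam (fjoin a)"
| "fjoin (FSlash a) = FSlash (fjoin a)"
| "fjoin (FLift s) = FLift (fjoin s)"
| "fjoin (FS n) = FS (fjoin n)"
| "fjoin FShift = FShift"
| "fjoin FZero = FZero"

text \<open>A derivation tree: the non-terminal X, the production right-hand side alpha used,
  and alpha with each non-terminal occurrence replaced by a derivation for it.\<close>
datatype drv = Drv nt "nt ftree" "drv ftree"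

primrec dnt :: "drv \<Rightarrow> nt" where
  "dnt (Drv X \<alpha> \<beta>) = X"

primrec yld :: "drv \<Rightarrow> nt ftree" where
  "yld (Drv X \<alpha> \<beta>) = fjoin (map_ftree yld \<beta>)"

inductive wfd :: "(nt \<times> nt ftree) set \<Rightarrow> drv \<Rightarrow> bool" for P where
  "(X, \<alpha>) \<in> P \<Longrightarrow> map_ftree dnt \<beta> = \<alpha> \<Longrightarrow> (\<forall>d\<in>set_ftree \<beta>. wfd P d)
     \<Longrightarrow> wfd P (Drv X \<alpha> \<beta>)"

definition lang :: "(nt \<times> nt ftree) set \<Rightarrow> nt \<Rightarrow> nt ftree set" where
  "lang P X = yld ` {d. wfd P d \<and> dnt d = X}"

definition unambiguous :: "(nt \<times> nt ftree) set \<Rightarrow> nt \<Rightarrow> bool" where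
  "unambiguous P X \<longleftrightarrow> inj_on yld {d. wfd P d \<and> dnt d = X}"

definition lang_pat :: "(nt \<times> nt ftree) set \<Rightarrow> nt ftree \<Rightarrow> nt ftree set" where
  "lang_pat P \<alpha> = {fjoin (map_ftree yld \<beta>) | \<beta>. map_ftree dnt \<beta> = \<alpha> \<and> (\<forall>d\<in>set_ftree \<beta>. wfd P d)}"

definition Lambda :: "(nt \<times> nt ftree) set" where
  "Lambda = {(NT, FV NN), (NT, FLam (FV NT)), (NT, FApp (FV NT) (FV NT)),
             (NT, FClos (FV NT) (FV NS)),
             (NS, FSlash (FV NT)), (NS, FLift (FV NS)), (NS, FShift),
             (NN, FZero), (NN, FS (FV NN))}"

definition lterms :: "nt ftree set" where
  "lterms = lang Lambda NT"

fun is_idx :: "'v ftree \<Rightarrow> bool" where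
  "is_idx FZero = True"
| "is_idx (FS n) = is_idx n"
| "is_idx _ = False"

fun root_step :: "'v ftree \<Rightarrow> 'v ftree option" where
  "root_step (FClos (FApp a b) s) = Some (FApp (FClos a s) (FClos b s))"
| "root_step (FClos (FLam a) s) = Some (FLam (FClos a (FLift s)))"
| "root_step (FClos FZero (FSlash a)) = Some a"
| "root_step (FClos (FS n) (FSlash a)) = Some n"
| "root_step (FClos FZero (FLift s)) = Some FZero"
| "root_step (FClos (FS n) (FLift s)) = Some (FClos (FClos n s) FShift)"
| "root_step (FClos n FShift) = (if is_idx n then Some (FS n) else None)"
| "root_step _ = None"

fun lo_step :: "'v ftree \<Rightarrow> 'v ftree option" where
  "lo_step (FApp a b) = (case lo_step a of Some a' \<Rightarrow> Some (FApp a' b)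
                          | None \<Rightarrow> map_option (FApp a) (lo_step b))"
| "lo_step (FClos a s) = (case root_step (FClos a s) of Some u \<Rightarrow> Some u
                          | None \<Rightarrow> (case lo_step a of Some a' \<Rightarrow> Some (FClos a' s)
                                     | None \<Rightarrow> map_option (FClos a) (lo_step s)))"
| "lo_step (FLam a) = map_option FLam (lo_step a)"
| "lo_step (FSlash a) = map_option FSlash (lo_step a)"
| "lo_step (FLift s) = map_option FLift (lo_step s)"
| "lo_step (FS n) = map_option FS (lo_step n)"
| "lo_step (FV v) = None"
| "lo_step FShift = None"
| "lo_step FZero = None"

fun nf_in :: "'v ftree \<Rightarrow> nat \<Rightarrow> bool" where
  "nf_in t 0 = (lo_step t = None)"
| "nf_in t (Suc k) = (case lo_step t of None \<Rightarrow> False | Some u \<Rightarrow> nf_in u k)"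

primrec pure :: "'v ftree \<Rightarrow> bool" where
  "pure (FV v) = True"
| "pure (FApp a b) = (pure a \<and> pure b)"
| "pure (FClos a s) = False"
| "pure (FLam a) = pure a"
| "pure (FSlash a) = pure a"
| "pure (FLift s) = pure s"
| "pure (FS n) = pure n"
| "pure FShift = True"
| "pure FZero = True"

definition gf :: "nt ftree set \<Rightarrow> real fps" where
  "gf A = Abs_fps (\<lambda>n. of_nat (card {t \<in> A. fsize t = n}))"

definition GfT :: "real fps" where "GfT = gf lterms"
definition GfS :: "real fps" where "GfS = gf (lang Lambda NS)"
definition GfN :: "real fps" where "GfN = gf (lang Lambda NN)"
definition Linf :: "real fps" where "Linf = gf {t \<in> lterms. pure t}"
definition Gi :: "nat \<Rightarrow> real fps" where "Gi i = gf {t \<in> lterms. nf_in t i}"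

definition nts :: "nat \<Rightarrow> nt set" where
  "nts k = {NT, NS, NN} \<union> NG ` {..k}"

definition upsilon_grammar :: "nat \<Rightarrow> (nt \<times> nt ftree) set \<Rightarrow> bool" where
  "upsilon_grammar k P \<longleftrightarrow>
     finite P \<and> Lambda \<subseteq> P \<and>
     (\<forall>(X, \<alpha>)\<in>P. X \<in> nts k \<and> set_ftree \<alpha> \<subseteq> nts k) \<and>
     (\<forall>(X, \<alpha>)\<in>P. X \<in> {NT, NS, NN} \<longrightarrow> (X, \<alpha>) \<in> Lambda) \<and>
     (\<forall>j\<le>k. unambiguous P (NG j) \<and> lang P (NG j) = {t \<in> lterms. nf_in t j})"

definition simple_grammar :: "nat \<Rightarrow> (nt \<times> nt ftree) set \<Rightarrow> bool" where
  "simple_grammar k P \<longleftrightarrow>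
     (\<forall>(X, \<alpha>)\<in>P.
        (X \<in> set_ftree \<alpha> \<longrightarrow>
           (X, \<alpha>) \<in> Lambda \<or>
           (\<exists>j. X = NG j \<and> \<alpha> \<in> {FLam (FV (NG j)), FApp (FV (NG 0)) (FV (NG j)),
                                   FApp (FV (NG j)) (FV (NG 0))})) \<and>
        (X \<notin> set_ftree \<alpha> \<longrightarrow>
           (\<forall>j. X = NG j \<longrightarrow> set_ftree \<alpha> \<subseteq> {NT, NS, NN} \<union> NG ` {..<j})))"

definition Phi :: "nat \<Rightarrow> (nt \<times> nt ftree) set \<Rightarrow> nt ftree set" where
  "Phi k P = {\<alpha>. (NG k, \<alpha>) \<in> P \<and> NG k \<notin> set_ftree \<alpha>}"

end

theory Submission
  imports Defs
begin

(* Unambiguity of G_k makes L(G_k) the disjoint union of the languages of its right-hand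
   sides, and the generating function of a right-hand side is z per terminal symbol times the
   generating functions of its non-terminals; for a regular right-hand side this is a monomial
   in z, T, S, N and G_0, ..., G_(k-1).  Simplicity leaves lambda G_k, G_0 G_k and G_k G_0 as
   the only possible self-referencing right-hand sides, and all three must occur: if M bounds
   the size of right-hand sides and c = 0[shift]...[shift] has k shifts, then lambda^(M+1) c,
   0 (lambda^(M+1) c) and (lambda^(M+1) c) 0 normalise in k steps, whereas a regular right-hand
   side deriving one of them has to derive the lambda-prefix through T and hence also derives
   a pure term, which needs 0 steps.  Since the normal forms among terms are exactly the pure
   terms, G_0 = L_inf, so G_k = z G_k + 2 z L_inf G_k + (regular contributions), and
   1 - z - 2 z L_inf is invertible. *)

section \<open>Pattern languages\<close>

lemma map_ftree_eq_iff:
  "map_ftree f \<beta> = FV X \<longleftrightarrow> (\<exists>d. \<beta> = FV d \<and> f d = X)"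
  "map_ftree f \<beta> = FApp a b \<longleftrightarrow> (\<exists>\<beta>1 \<beta>2. \<beta> = FApp \<beta>1 \<beta>2 \<and> map_ftree f \<beta>1 = a \<and> map_ftree f \<beta>2 = b)"
  "map_ftree f \<beta> = FClos a b \<longleftrightarrow> (\<exists>\<beta>1 \<beta>2. \<beta> = FClos \<beta>1 \<beta>2 \<and> map_ftree f \<beta>1 = a \<and> map_ftree f \<beta>2 = b)"
  "map_ftree f \<beta> = FLam a \<longleftrightarrow> (\<exists>\<beta>1. \<beta> = FLam \<beta>1 \<and> map_ftree f \<beta>1 = a)"
  "map_ftree f \<beta> = FSlash a \<longleftrightarrow> (\<exists>\<beta>1. \<beta> = FSlash \<beta>1 \<and> map_ftree f \<beta>1 = a)"
  "map_ftree f \<beta> = FLift a \<longleftrightarrow> (\<exists>\<beta>1. \<beta> = FLift \<beta>1 \<and> map_ftree f \<beta>1 = a)"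
  "map_ftree f \<beta> = FS a \<longleftrightarrow> (\<exists>\<beta>1. \<beta> = FS \<beta>1 \<and> map_ftree f \<beta>1 = a)"
  "map_ftree f \<beta> = FShift \<longleftrightarrow> \<beta> = FShift"
  "map_ftree f \<beta> = FZero \<longleftrightarrow> \<beta> = FZero"
  by (cases \<beta>; auto)+

lemma lang_pat_FV [simp]: "lang_pat P (FV X) = lang P X"
  unfolding lang_pat_def lang_def
  by (auto simp: map_ftree_eq_iff) (metis fjoin.simps(1) ftree.map(1) ftree.set(1) singletonD)

lemma lang_pat_FShift [simp]: "lang_pat P FShift = {FShift}"
  unfolding lang_pat_def by (auto simp: map_ftree_eq_iff)

lemma lang_pat_FZero [simp]: "lang_pat P FZero = {FZero}"
  unfolding lang_pat_def by (auto simp: map_ftree_eq_iff)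

lemma mem_lang_pat_FApp [simp]:
  "t \<in> lang_pat P (FApp a b) \<longleftrightarrow> (\<exists>u v. t = FApp u v \<and> u \<in> lang_pat P a \<and> v \<in> lang_pat P b)"
  unfolding lang_pat_def
  by (auto simp: map_ftree_eq_iff; metis Un_iff fjoin.simps(2) ftree.map(2) ftree.set(2))

lemma mem_lang_pat_FClos [simp]:
  "t \<in> lang_pat P (FClos a b) \<longleftrightarrow> (\<exists>u v. t = FClos u v \<and> u \<in> lang_pat P a \<and> v \<in> lang_pat P b)"
  unfolding lang_pat_def
  by (auto simp: map_ftree_eq_iff; metis Un_iff fjoin.simps(3) ftree.map(3) ftree.set(3))

lemma mem_lang_pat_FLam [simp]:
  "t \<in> lang_pat P (FLam a) \<longleftrightarrow> (\<exists>u. t = FLam u \<and> u \<in> lang_pat P a)"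
  unfolding lang_pat_def
  by (auto simp: map_ftree_eq_iff) (metis fjoin.simps(4) ftree.map(4) ftree.set(4))

lemma mem_lang_pat_FSlash [simp]:
  "t \<in> lang_pat P (FSlash a) \<longleftrightarrow> (\<exists>u. t = FSlash u \<and> u \<in> lang_pat P a)"
  unfolding lang_pat_def
  by (auto simp: map_ftree_eq_iff) (metis fjoin.simps(5) ftree.map(5) ftree.set(5))

lemma mem_lang_pat_FLift [simp]:
  "t \<in> lang_pat P (FLift a) \<longleftrightarrow> (\<exists>u. t = FLift u \<and> u \<in> lang_pat P a)"
  unfolding lang_pat_def
  by (auto simp: map_ftree_eq_iff) (metis fjoin.simps(6) ftree.map(6) ftree.set(6))

lemma mem_lang_pat_FS [simp]:
  "t \<in> lang_pat P (FS a) \<longleftrightarrow> (\<exists>u. t = FS u \<and> u \<in> lang_pat P a)"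
  unfolding lang_pat_def
  by (auto simp: map_ftree_eq_iff) (metis fjoin.simps(7) ftree.map(7) ftree.set(7))

lemma lang_pat_lams: "x \<in> lang P X \<Longrightarrow> (FLam ^^ d) x \<in> lang_pat P ((FLam ^^ d) (FV X))"
  by (induction d) auto

lemma lams_in_lang_pat:
  "(FLam ^^ (fsize \<alpha> + Suc n)) c \<in> lang_pat P \<alpha> \<Longrightarrow>
     \<exists>X. \<alpha> = (FLam ^^ fsize \<alpha>) (FV X) \<and> (FLam ^^ Suc n) c \<in> lang P X"
  by (induction \<alpha>) auto

lemma lang_eq_UN_rhs: "lang P X = (\<Union>\<alpha>\<in>{\<alpha>. (X, \<alpha>) \<in> P}. lang_pat P \<alpha>)"
proof (intro set_eqI iffI)
  fix t assume "t \<in> lang P X"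
  then obtain d where d: "wfd P d" "dnt d = X" "t = yld d" by (auto simp: lang_def)
  from d(1) obtain Y \<alpha> \<beta> where "d = Drv Y \<alpha> \<beta>" "(Y, \<alpha>) \<in> P" "map_ftree dnt \<beta> = \<alpha>"
    "\<forall>d\<in>set_ftree \<beta>. wfd P d"
    by (cases rule: wfd.cases) auto
  then show "t \<in> (\<Union>\<alpha>\<in>{\<alpha>. (X, \<alpha>) \<in> P}. lang_pat P \<alpha>)" using d unfolding lang_pat_def by auto
next
  fix t assume "t \<in> (\<Union>\<alpha>\<in>{\<alpha>. (X, \<alpha>) \<in> P}. lang_pat P \<alpha>)"
  then obtain \<alpha> \<beta> where "(X, \<alpha>) \<in> P" "map_ftree dnt \<beta> = \<alpha>" "\<forall>d\<in>set_ftree \<beta>. wfd P d"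
    and t: "t = fjoin (map_ftree yld \<beta>)"
    unfolding lang_pat_def by auto
  then have "wfd P (Drv X \<alpha> \<beta>)" by (intro wfd.intros)
  then show "t \<in> lang P X" unfolding lang_def t by (intro image_eqI[of _ _ "Drv X \<alpha> \<beta>"]) auto
qed

lemma unambiguous_rhs_disjoint:
  assumes "unambiguous P X" "(X, \<alpha>1) \<in> P" "(X, \<alpha>2) \<in> P" "\<alpha>1 \<noteq> \<alpha>2"
  shows "lang_pat P \<alpha>1 \<inter> lang_pat P \<alpha>2 = {}"
proof (rule ccontr)
  assume "lang_pat P \<alpha>1 \<inter> lang_pat P \<alpha>2 \<noteq> {}"
  then obtain \<beta>1 \<beta>2 where b: "map_ftree dnt \<beta>1 = \<alpha>1" "\<forall>d\<in>set_ftree \<beta>1. wfd P d"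
    "map_ftree dnt \<beta>2 = \<alpha>2" "\<forall>d\<in>set_ftree \<beta>2. wfd P d"
    and same_yield: "fjoin (map_ftree yld \<beta>1) = fjoin (map_ftree yld \<beta>2)"
    unfolding lang_pat_def by auto
  have "wfd P (Drv X \<alpha>1 \<beta>1)" "wfd P (Drv X \<alpha>2 \<beta>2)"
    using assms(2,3) b by (auto intro: wfd.intros)
  then have "Drv X \<alpha>1 \<beta>1 = Drv X \<alpha>2 \<beta>2"
    using same_yield by (intro inj_onD[OF assms(1)[unfolded unambiguous_def]]) auto
  then show False using assms(4) by simp
qed

lemma set_ftree_fjoin: "set_ftree (fjoin t) = \<Union> (set_ftree ` set_ftree t)"
  by (induction t) auto

lemma set_ftree_yld: "set_ftree (yld d) = {}"
  by (induction d) (auto simp: set_ftree_fjoin ftree.set_map)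

lemma set_ftree_lang_pat: "t \<in> lang_pat P \<alpha> \<Longrightarrow> set_ftree t = {}"
  unfolding lang_pat_def by (auto simp: set_ftree_fjoin ftree.set_map set_ftree_yld)

section \<open>Sorts of lambda-upsilon terms and normalisation\<close>

fun is_term :: "'v ftree \<Rightarrow> bool" and is_subst :: "'v ftree \<Rightarrow> bool" where
  "is_term (FLam a) = is_term a"
| "is_term (FApp a b) = (is_term a \<and> is_term b)"
| "is_term (FClos a s) = (is_term a \<and> is_subst s)"
| "is_term t = is_idx t"
| "is_subst (FSlash a) = is_term a"
| "is_subst (FLift s) = is_subst s"
| "is_subst FShift = True"
| "is_subst _ = False"

lemma lang_T_S_N:
  assumes "Lambda \<subseteq> P" and "\<forall>(X, \<alpha>)\<in>P. X \<in> {NT, NS, NN} \<longrightarrow> (X, \<alpha>) \<in> Lambda"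
  shows "lang P NT = {t. is_term t}" "lang P NS = {s. is_subst s}" "lang P NN = {n. is_idx n}"
proof -
  have mem_rhs: "t \<in> lang P X \<longleftrightarrow> (\<exists>\<alpha>. (X, \<alpha>) \<in> P \<and> t \<in> lang_pat P \<alpha>)" for t X
    using lang_eq_UN_rhs by blast
  have rhs:
    "(NT, \<alpha>) \<in> P \<longleftrightarrow> \<alpha> \<in> {FV NN, FLam (FV NT), FApp (FV NT) (FV NT), FClos (FV NT) (FV NS)}"
    "(NS, \<alpha>) \<in> P \<longleftrightarrow> \<alpha> \<in> {FSlash (FV NT), FLift (FV NS), FShift}"
    "(NN, \<alpha>) \<in> P \<longleftrightarrow> \<alpha> \<in> {FZero, FS (FV NN)}" for \<alpha>
    using assms unfolding Lambda_def by auto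
  have unfold: "(t \<in> lang P NT \<longleftrightarrow> t \<in> lang P NN \<or> (\<exists>a. t = FLam a \<and> a \<in> lang P NT)
        \<or> (\<exists>a b. t = FApp a b \<and> a \<in> lang P NT \<and> b \<in> lang P NT)
        \<or> (\<exists>a s. t = FClos a s \<and> a \<in> lang P NT \<and> s \<in> lang P NS))
      \<and> (t \<in> lang P NS \<longleftrightarrow> (\<exists>a. t = FSlash a \<and> a \<in> lang P NT)
        \<or> (\<exists>s. t = FLift s \<and> s \<in> lang P NS) \<or> t = FShift)
      \<and> (t \<in> lang P NN \<longleftrightarrow> t = FZero \<or> (\<exists>n. t = FS n \<and> n \<in> lang P NN))" for t
    by (intro conjI; subst mem_rhs; simp add: rhs conj_disj_distribR ex_disj_distrib)
  have "(t \<in> lang P NT \<longleftrightarrow> is_term t) \<and> (t \<in> lang P NS \<longleftrightarrow> is_subst t)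
      \<and> (t \<in> lang P NN \<longleftrightarrow> is_idx t)" for t
    \<comment> \<open>unfold is instantiated at constructor terms only, so that simp does not keep
      unfolding the membership of a variable subterm\<close>
    by (induction t) (simp_all add: unfold[of "FV _"] unfold[of "FApp _ _"] unfold[of "FClos _ _"]
        unfold[of "FLam _"] unfold[of "FSlash _"] unfold[of "FLift _"] unfold[of "FS _"]
        unfold[of FShift] unfold[of FZero])
  then show "lang P NT = {t. is_term t}" "lang P NS = {s. is_subst s}" "lang P NN = {n. is_idx n}"
    by auto
qed

lemma lang_Lambda:
  "lang Lambda NT = {t. is_term t}" "lang Lambda NS = {s. is_subst s}" "lang Lambda NN = {n. is_idx n}"
  by (rule lang_T_S_N; auto)+

lemma lterms_eq: "lterms = {t. is_term t}"
  unfolding lterms_def by (rule lang_Lambda(1))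

lemma is_term_lams: "is_term ((FLam ^^ d) t) = is_term t"
  by (induction d) auto

lemma lo_step_pure: "pure t \<Longrightarrow> lo_step t = None"
  by (induction t) auto

lemma root_step_closure_pure:
  "is_term a \<Longrightarrow> is_subst s \<Longrightarrow> pure a \<Longrightarrow> root_step (FClos a s) \<noteq> None"
  by (cases a; cases s) auto

lemma pure_idx: "is_idx n \<Longrightarrow> pure n"
  by (induction n) auto

lemma lo_step_None_iff_pure: "is_term t \<Longrightarrow> lo_step t = None \<longleftrightarrow> pure t"
  by (induction t)
    (auto simp: lo_step_pure pure_idx split: option.splits dest: root_step_closure_pure)

lemma nf_in_unique: "nf_in t i \<Longrightarrow> nf_in t j \<Longrightarrow> i = j"
proof (induction i arbitrary: t j)
  case 0
  then show ?case by (cases j) auto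
next
  case (Suc i)
  then show ?case by (cases j) (auto split: option.splits)
qed

lemma nf_in_lams: "nf_in ((FLam ^^ d) t) k = nf_in t k"
proof -
  have "nf_in (FLam u) k = nf_in u k" for u :: "'v ftree"
    by (induction k arbitrary: u) (auto split: option.splits)
  then show ?thesis by (induction d) auto
qed

lemma nf_in_FApp_normal_left: "lo_step a = None \<Longrightarrow> nf_in (FApp a b) k = nf_in b k"
  by (induction k arbitrary: b) (auto split: option.splits)

lemma nf_in_FApp_normal_right: "lo_step b = None \<Longrightarrow> nf_in (FApp a b) k = nf_in a k"
  by (induction k arbitrary: a) (auto split: option.splits)

lemma nf_in_impure: "nf_in t k \<Longrightarrow> 0 < k \<Longrightarrow> \<not> pure t"
  by (cases k) (auto simp: lo_step_pure)

primrec shifted :: "nat \<Rightarrow> 'v ftree \<Rightarrow> 'v ftree" where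
  "shifted 0 n = n"
| "shifted (Suc k) n = FClos (shifted k n) FShift"

lemma is_term_shifted: "is_idx n \<Longrightarrow> is_term (shifted k n)"
  by (induction k) (auto elim: is_idx.elims)

lemma lo_step_shifted: "is_idx n \<Longrightarrow> lo_step (shifted (Suc k) n) = Some (shifted k (FS n))"
proof (induction k arbitrary: n)
  case 0
  then show ?case by (cases n) (auto simp: lo_step_pure)
next
  case (Suc k)
  then show ?case by simp
qed

lemma nf_in_shifted: "is_idx n \<Longrightarrow> nf_in (shifted k n) k"
proof (induction k arbitrary: n)
  case 0
  then show ?case by (simp add: lo_step_pure pure_idx)
next
  case (Suc k)
  then show ?case using Suc.IH[of "FS n"] lo_step_shifted[of n k]
    by (simp only: nf_in.simps option.case) simp
qed

lemma Gi_0_eq_Linf: "Gi 0 = Linf"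
  unfolding Gi_def Linf_def lterms_eq by (metis nf_in.simps(1) lo_step_None_iff_pure mem_Collect_eq)

section \<open>Generating functions\<close>

lemma finite_ground_size_le: "finite {t :: 'v ftree. set_ftree t = {} \<and> fsize t \<le> n}"
proof (induction n)
  case 0
  have "set_ftree t = {} \<Longrightarrow> 0 < fsize t" for t :: "'v ftree"
    by (cases t) auto
  then have "{t :: 'v ftree. set_ftree t = {} \<and> fsize t \<le> 0} = {}"
    by fastforce
  then show ?case by (metis finite.emptyI)
next
  case (Suc n)
  define A where "A = {t :: 'v ftree. set_ftree t = {} \<and> fsize t \<le> n}"
  have "{t :: 'v ftree. set_ftree t = {} \<and> fsize t \<le> Suc n} \<subseteq> {FShift, FZero}
      \<union> FLam ` A \<union> FSlash ` A \<union> FLift ` A \<union> FS ` A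
      \<union> case_prod FApp ` (A \<times> A) \<union> case_prod FClos ` (A \<times> A)"
  proof
    fix t :: "'v ftree" assume "t \<in> {t. set_ftree t = {} \<and> fsize t \<le> Suc n}"
    then show "t \<in> {FShift, FZero} \<union> FLam ` A \<union> FSlash ` A \<union> FLift ` A \<union> FS ` A
      \<union> case_prod FApp ` (A \<times> A) \<union> case_prod FClos ` (A \<times> A)"
      unfolding A_def by (cases t) auto
  qed
  moreover have "finite A" using Suc.IH unfolding A_def .
  ultimately show ?case by (auto intro: finite_subset)
qed

lemma finite_lang_pat_size: "finite {t \<in> lang_pat P \<alpha>. fsize t = n}"
  by (rule finite_subset[OF _ finite_ground_size_le[of n]]) (auto dest: set_ftree_lang_pat)

lemma gf_UN_disjoint:
  assumes "finite I" and "\<And>i j. i \<in> I \<Longrightarrow> j \<in> I \<Longrightarrow> i \<noteq> j \<Longrightarrow> A i \<inter> A j = {}"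
    and "\<And>i n. i \<in> I \<Longrightarrow> finite {t \<in> A i. fsize t = n}"
  shows "gf (\<Union>i\<in>I. A i) = (\<Sum>i\<in>I. gf (A i))"
proof (rule fps_ext)
  fix n
  have "{t \<in> (\<Union>i\<in>I. A i). fsize t = n} = (\<Union>i\<in>I. {t \<in> A i. fsize t = n})" by auto
  moreover have "card (\<Union>i\<in>I. {t \<in> A i. fsize t = n}) = (\<Sum>i\<in>I. card {t \<in> A i. fsize t = n})"
    using assms by (intro card_UN_disjoint) auto
  ultimately show "fps_nth (gf (\<Union>i\<in>I. A i)) n = fps_nth (\<Sum>i\<in>I. gf (A i)) n"
    by (simp add: gf_def fps_sum_nth)
qed

lemma gf_image_unary:
  assumes "\<And>x. fsize (c x) = Suc (fsize x)" and "inj c"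
  shows "gf (c ` A) = fps_X * gf A"
proof (rule fps_ext)
  fix n
  have "{t \<in> c ` A. fsize t = Suc m} = c ` {x \<in> A. fsize x = m}" for m
    using assms(1) by auto
  moreover have "{t \<in> c ` A. fsize t = 0} = {}"
    using assms(1) by auto
  ultimately show "fps_nth (gf (c ` A)) n = fps_nth (fps_X * gf A) n"
    using assms(2)
    by (cases n) (simp_all add: gf_def card_image inj_on_subset del: Collect_empty_eq)
qed

lemma card_pairs_of_total_size:
  fixes sz :: "'a \<Rightarrow> nat"
  assumes "\<And>n. finite {x \<in> A. sz x = n}" and "\<And>n. finite {y \<in> B. sz y = n}"
  shows "card {(x, y) \<in> A \<times> B. sz x + sz y = m}
    = (\<Sum>i\<le>m. card {x \<in> A. sz x = i} * card {y \<in> B. sz y = m - i})"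
proof -
  have "{(x, y) \<in> A \<times> B. sz x + sz y = m}
      = (\<Union>i\<le>m. {x \<in> A. sz x = i} \<times> {y \<in> B. sz y = m - i})"
    by auto
  moreover have "card (\<Union>i\<le>m. {x \<in> A. sz x = i} \<times> {y \<in> B. sz y = m - i})
      = (\<Sum>i\<le>m. card ({x \<in> A. sz x = i} \<times> {y \<in> B. sz y = m - i}))"
    using assms by (intro card_UN_disjoint) auto
  ultimately show ?thesis by (simp add: card_cartesian_product)
qed

lemma gf_image_binary:
  assumes size_c: "\<And>x y. fsize (c x y) = Suc (fsize x + fsize y)"
    and inj_c: "\<And>x y x' y'. c x y = c x' y' \<Longrightarrow> x = x' \<and> y = y'"
    and "\<And>n. finite {x \<in> A. fsize x = n}" and "\<And>n. finite {y \<in> B. fsize y = n}"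
  shows "gf (case_prod c ` (A \<times> B)) = fps_X * gf A * gf B"
proof (rule fps_ext)
  fix n
  show "fps_nth (gf (case_prod c ` (A \<times> B))) n = fps_nth (fps_X * gf A * gf B) n"
  proof (cases n)
    case 0
    have empty: "{t \<in> case_prod c ` (A \<times> B). fsize t = 0} = {}"
      using size_c by auto
    show ?thesis by (simp add: gf_def empty 0)
  next
    case (Suc m)
    have "inj_on (case_prod c) X" for X
      by (auto simp: inj_on_def dest: inj_c)
    then have "card {t \<in> case_prod c ` (A \<times> B). fsize t = n}
        = card {(x, y) \<in> A \<times> B. fsize x + fsize y = m}"
      using size_c Suc by (subst card_image[symmetric]) (auto intro!: arg_cong[of _ _ card])
    also have "\<dots> = (\<Sum>i\<le>m. card {x \<in> A. fsize x = i} * card {y \<in> B. fsize y = m - i})"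
      using assms(3,4) by (rule card_pairs_of_total_size)
    moreover have "fps_nth (fps_X * gf A * gf B) n = fps_nth (gf A * gf B) m"
      using Suc by (simp add: mult.assoc fps_X_mult_nth)
    ultimately show ?thesis
      by (simp add: gf_def fps_mult_nth atLeast0AtMost)
  qed
qed

lemma gf_singleton:
  assumes "fsize x = 1"
  shows "gf {x} = fps_X"
proof (rule fps_ext)
  fix n
  have "{t \<in> {x}. fsize t = n} = (if n = 1 then {x} else {})"
    using assms by auto
  then show "fps_nth (gf {x}) n = fps_nth fps_X n"
    by (simp add: gf_def)
qed

primrec pat_gf :: "(nt \<Rightarrow> real fps) \<Rightarrow> nt ftree \<Rightarrow> real fps" where
  "pat_gf v (FV X) = v X"
| "pat_gf v (FApp a b) = fps_X * pat_gf v a * pat_gf v b"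
| "pat_gf v (FClos a s) = fps_X * pat_gf v a * pat_gf v s"
| "pat_gf v (FLam a) = fps_X * pat_gf v a"
| "pat_gf v (FSlash a) = fps_X * pat_gf v a"
| "pat_gf v (FLift s) = fps_X * pat_gf v s"
| "pat_gf v (FS n) = fps_X * pat_gf v n"
| "pat_gf v FShift = fps_X"
| "pat_gf v FZero = fps_X"

lemma gf_lang_pat: "gf (lang_pat P \<alpha>) = pat_gf (\<lambda>X. gf (lang P X)) \<alpha>"
proof (induction \<alpha>)
  case (FApp a b)
  have "lang_pat P (FApp a b) = case_prod FApp ` (lang_pat P a \<times> lang_pat P b)" by force
  moreover have "gf (case_prod FApp ` (lang_pat P a \<times> lang_pat P b))
      = fps_X * gf (lang_pat P a) * gf (lang_pat P b)"
    by (rule gf_image_binary) (simp_all add: finite_lang_pat_size)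
  ultimately show ?case using FApp by simp
next
  case (FClos a s)
  have "lang_pat P (FClos a s) = case_prod FClos ` (lang_pat P a \<times> lang_pat P s)" by force
  moreover have "gf (case_prod FClos ` (lang_pat P a \<times> lang_pat P s))
      = fps_X * gf (lang_pat P a) * gf (lang_pat P s)"
    by (rule gf_image_binary) (simp_all add: finite_lang_pat_size)
  ultimately show ?case using FClos by simp
next
  case (FLam a)
  have "lang_pat P (FLam a) = FLam ` lang_pat P a" by force
  then show ?case using FLam by (simp add: gf_image_unary inj_def)
next
  case (FSlash a)
  have "lang_pat P (FSlash a) = FSlash ` lang_pat P a" by force
  then show ?case using FSlash by (simp add: gf_image_unary inj_def)
next
  case (FLift s)
  have "lang_pat P (FLift s) = FLift ` lang_pat P s" by force
  then show ?case using FLift by (simp add: gf_image_unary inj_def)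
next
  case (FS n)
  have "lang_pat P (FS n) = FS ` lang_pat P n" by force
  then show ?case using FS by (simp add: gf_image_unary inj_def)
qed (simp_all add: gf_singleton)

definition gf_monomial :: "nat \<Rightarrow> real fps \<Rightarrow> bool" where
  "gf_monomial k f \<longleftrightarrow> (\<exists>\<zeta> \<tau> \<sigma> \<nu> (\<rho> :: nat \<Rightarrow> nat).
     f = fps_X ^ \<zeta> * GfT ^ \<tau> * GfS ^ \<sigma> * GfN ^ \<nu> * (\<Prod>i<k. Gi i ^ \<rho> i))"

lemma gf_monomialI:
  "f = fps_X ^ \<zeta> * GfT ^ \<tau> * GfS ^ \<sigma> * GfN ^ \<nu> * (\<Prod>i<k. Gi i ^ \<rho> i) \<Longrightarrow> gf_monomial k f"
  unfolding gf_monomial_def by blast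

lemma gf_monomial_mult:
  assumes "gf_monomial k f" and "gf_monomial k g"
  shows "gf_monomial k (f * g)"
proof -
  obtain z t s n r where "f = fps_X ^ z * GfT ^ t * GfS ^ s * GfN ^ n * (\<Prod>i<k. Gi i ^ r i)"
    using assms(1) unfolding gf_monomial_def by blast
  moreover obtain z' t' s' n' r'
    where "g = fps_X ^ z' * GfT ^ t' * GfS ^ s' * GfN ^ n' * (\<Prod>i<k. Gi i ^ r' i)"
    using assms(2) unfolding gf_monomial_def by blast
  ultimately show ?thesis
    by (intro gf_monomialI[of _ "z + z'" "t + t'" "s + s'" "n + n'" "\<lambda>i. r i + r' i"])
      (simp add: power_add prod.distrib mult_ac)
qed

lemma gf_monomial_generators:
  "gf_monomial k fps_X" "gf_monomial k GfT" "gf_monomial k GfS" "gf_monomial k GfN"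
  "i < k \<Longrightarrow> gf_monomial k (Gi i)"
proof -
  show "gf_monomial k fps_X" by (rule gf_monomialI[of _ 1 0 0 0 "\<lambda>_. 0"]) simp
  show "gf_monomial k GfT" by (rule gf_monomialI[of _ 0 1 0 0 "\<lambda>_. 0"]) simp
  show "gf_monomial k GfS" by (rule gf_monomialI[of _ 0 0 1 0 "\<lambda>_. 0"]) simp
  show "gf_monomial k GfN" by (rule gf_monomialI[of _ 0 0 0 1 "\<lambda>_. 0"]) simp
  assume "i < k"
  have "(\<Prod>j<k. Gi j ^ (if j = i then 1 else 0)) = (\<Prod>j<k. if j = i then Gi j else 1)"
    by (rule prod.cong) auto
  also have "\<dots> = Gi i"
    using \<open>i < k\<close> by simp
  finally show "gf_monomial k (Gi i)"
    by (intro gf_monomialI[of _ 0 0 0 0 "\<lambda>j. if j = i then 1 else 0"]) simp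
qed

lemma pat_gf_monomial:
  assumes "set_ftree \<alpha> \<subseteq> V" and "\<And>X. X \<in> V \<Longrightarrow> gf_monomial k (v X)"
  shows "gf_monomial k (pat_gf v \<alpha>)"
  using assms by (induction \<alpha>) (auto intro!: gf_monomial_mult gf_monomial_generators)

section \<open>Simple upsilon-reduction grammars\<close>

locale simple_upsilon_grammar =
  fixes k :: nat and P :: "(nt \<times> nt ftree) set"
  assumes k_pos: "1 \<le> k" and upsilon: "upsilon_grammar k P" and simple: "simple_grammar k P"
begin

abbreviation regular_nts :: "nt set" where
  "regular_nts \<equiv> {NT, NS, NN} \<union> NG ` {..<k}"

abbreviation rhs_lam :: "nt ftree" where
  "rhs_lam \<equiv> FLam (FV (NG k))"

abbreviation rhs_app_right :: "nt ftree" where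
  "rhs_app_right \<equiv> FApp (FV (NG 0)) (FV (NG k))"

abbreviation rhs_app_left :: "nt ftree" where
  "rhs_app_left \<equiv> FApp (FV (NG k)) (FV (NG 0))"

lemma lang_base_nts:
  "lang P NT = {t. is_term t}" "lang P NS = {s. is_subst s}" "lang P NN = {n. is_idx n}"
proof -
  have "Lambda \<subseteq> P" and "\<forall>(X, \<alpha>)\<in>P. X \<in> {NT, NS, NN} \<longrightarrow> (X, \<alpha>) \<in> Lambda"
    using upsilon unfolding upsilon_grammar_def by blast+
  then show "lang P NT = {t. is_term t}" "lang P NS = {s. is_subst s}" "lang P NN = {n. is_idx n}"
    by (rule lang_T_S_N)+
qed

lemma lang_NG: "j \<le> k \<Longrightarrow> lang P (NG j) = {t. is_term t \<and> nf_in t j}"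
  using upsilon unfolding upsilon_grammar_def lterms_eq by auto

lemma gf_lang_nts:
  "gf (lang P NT) = GfT" "gf (lang P NS) = GfS" "gf (lang P NN) = GfN"
  "j \<le> k \<Longrightarrow> gf (lang P (NG j)) = Gi j"
  unfolding GfT_def GfS_def GfN_def Gi_def lterms_def
  by (simp_all add: lang_base_nts lang_NG lang_Lambda)

lemma rhs_G_k_cases: "(NG k, \<alpha>) \<in> P \<Longrightarrow> \<alpha> \<in> {rhs_lam, rhs_app_right, rhs_app_left} \<union> Phi k P"
  using simple unfolding simple_grammar_def Phi_def Lambda_def by fastforce

lemma Phi_regular: "\<alpha> \<in> Phi k P \<Longrightarrow> (NG k, \<alpha>) \<in> P \<and> set_ftree \<alpha> \<subseteq> regular_nts"
  using simple unfolding simple_grammar_def Phi_def by fastforce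

lemma rhs_G_k_impure:
  assumes "(NG k, \<alpha>) \<in> P" and "t \<in> lang_pat P \<alpha>"
  shows "\<not> pure t"
proof -
  have "t \<in> lang P (NG k)"
    using assms lang_eq_UN_rhs[of P "NG k"] by blast
  then show ?thesis
    using k_pos nf_in_impure[of t k] by (simp add: lang_NG)
qed

lemma FZero_notin_G_k: "FZero \<notin> lang P (NG k)"
  using k_pos nf_in_impure[of FZero k] by (auto simp: lang_NG)

lemma regular_nt_escapes_G_k:
  assumes "X \<in> regular_nts"
  shows "\<exists>t\<in>lang P X. t \<notin> lang P (NG k)"
proof -
  from assms consider "X = NT" | "X = NS" | "X = NN" | i where "X = NG i" "i < k"
    by blast
  then show ?thesis
  proof cases
    case 1
    then show ?thesis using FZero_notin_G_k by (intro bexI[of _ FZero]) (auto simp: lang_base_nts)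
  next
    case 2
    then show ?thesis by (intro bexI[of _ FShift]) (auto simp: lang_base_nts lang_NG)
  next
    case 3
    then show ?thesis using FZero_notin_G_k by (intro bexI[of _ FZero]) (auto simp: lang_base_nts)
  next
    case (4 i)
    then show ?thesis
      using nf_in_unique[of "shifted i FZero" i k]
      by (intro bexI[of _ "shifted i FZero"]) (auto simp: lang_NG is_term_shifted nf_in_shifted)
  qed
qed

lemma FV_notin_Phi: "FV X \<notin> Phi k P"
proof
  assume "FV X \<in> Phi k P"
  then have "X \<in> regular_nts" and "lang P X \<subseteq> lang P (NG k)"
    using Phi_regular lang_eq_UN_rhs[of P "NG k"] by fastforce+
  then show False using regular_nt_escapes_G_k by blast
qed

lemma lams_in_regular_pattern:
  assumes "set_ftree \<alpha> \<subseteq> regular_nts" and "(FLam ^^ m) c \<in> lang_pat P \<alpha>"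
    and "fsize \<alpha> < m" and "nf_in c k"
  shows "\<exists>d. (FLam ^^ d) FZero \<in> lang_pat P \<alpha>"
proof -
  obtain n where "m = fsize \<alpha> + Suc n"
    using less_imp_Suc_add[OF assms(3)] by auto
  then obtain X where \<alpha>: "\<alpha> = (FLam ^^ fsize \<alpha>) (FV X)" and u: "(FLam ^^ Suc n) c \<in> lang P X"
    using lams_in_lang_pat assms(2) by metis
  have "set_ftree ((FLam ^^ d) (FV X)) = {X}" for d
    by (induction d) auto
  then have "X \<in> regular_nts"
    using assms(1) \<alpha> by (metis insert_subset)
  moreover have "X \<noteq> NS" "X \<noteq> NN"
    using u by (auto simp: lang_base_nts)
  moreover have "X \<noteq> NG i" if "i < k" for i
    using u that nf_in_unique[of "(FLam ^^ Suc n) c" i k] assms(4)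
    by (auto simp: lang_NG nf_in_lams simp del: funpow.simps)
  ultimately have "X = NT" by blast
  then show ?thesis
    using lang_pat_lams[of FZero P NT "fsize \<alpha>"] \<alpha> by (auto simp: lang_base_nts)
qed

lemma Phi_avoids_deep_lambdas:
  assumes "\<alpha> \<in> Phi k P" and "fsize \<alpha> < m" and "nf_in c k"
  shows "(FLam ^^ m) c \<notin> lang_pat P \<alpha>" and "FApp FZero ((FLam ^^ m) c) \<notin> lang_pat P \<alpha>"
    and "FApp ((FLam ^^ m) c) FZero \<notin> lang_pat P \<alpha>"
proof -
  have reg: "set_ftree \<alpha> \<subseteq> regular_nts" and impure: "\<And>t. t \<in> lang_pat P \<alpha> \<Longrightarrow> \<not> pure t"
    using Phi_regular[OF assms(1)] rhs_G_k_impure by auto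
  have pure_lams: "pure ((FLam ^^ d) FZero)" for d :: nat
    by (induction d) auto
  show "(FLam ^^ m) c \<notin> lang_pat P \<alpha>"
    using lams_in_regular_pattern[OF reg _ assms(2,3)] impure pure_lams by blast
  show "FApp FZero ((FLam ^^ m) c) \<notin> lang_pat P \<alpha>"
  proof
    assume mem: "FApp FZero ((FLam ^^ m) c) \<in> lang_pat P \<alpha>"
    then obtain a b where ab: "\<alpha> = FApp a b"
      using FV_notin_Phi assms(1) by (cases \<alpha>) auto
    then obtain d where "(FLam ^^ d) FZero \<in> lang_pat P b"
      using mem reg assms(2,3) lams_in_regular_pattern[of b m c] by auto
    then have "FApp FZero ((FLam ^^ d) FZero) \<in> lang_pat P \<alpha>"
      using mem ab by auto
    then show False using impure pure_lams by fastforce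
  qed
  show "FApp ((FLam ^^ m) c) FZero \<notin> lang_pat P \<alpha>"
  proof
    assume mem: "FApp ((FLam ^^ m) c) FZero \<in> lang_pat P \<alpha>"
    then obtain a b where ab: "\<alpha> = FApp a b"
      using FV_notin_Phi assms(1) by (cases \<alpha>) auto
    then obtain d where "(FLam ^^ d) FZero \<in> lang_pat P a"
      using mem reg assms(2,3) lams_in_regular_pattern[of a m c] by auto
    then have "FApp ((FLam ^^ d) FZero) FZero \<in> lang_pat P \<alpha>"
      using mem ab by auto
    then show False using impure pure_lams by fastforce
  qed
qed

lemma self_referencing_rhs_present:
  "(NG k, rhs_lam) \<in> P" "(NG k, rhs_app_right) \<in> P" "(NG k, rhs_app_left) \<in> P"
proof -
  have "finite (fsize ` snd ` P)"
    using upsilon unfolding upsilon_grammar_def by blast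
  then obtain M where M: "\<And>X \<alpha>. (X, \<alpha>) \<in> P \<Longrightarrow> fsize \<alpha> \<le> M"
    by (force simp: finite_nat_set_iff_bounded_le)
  define c where "c = (FLam ^^ Suc M) (shifted k FZero :: nt ftree)"
  have c: "is_term c" "nf_in c k" "\<not> nf_in c 0"
    using k_pos nf_in_unique[of c 0 k]
    by (auto simp: c_def nf_in_lams is_term_lams is_term_shifted nf_in_shifted
        simp del: funpow.simps)
  have witness:
    "\<exists>\<alpha>\<in>{rhs_lam, rhs_app_right, rhs_app_left}. (NG k, \<alpha>) \<in> P \<and> t \<in> lang_pat P \<alpha>"
    if t_form: "t \<in> {c, FApp FZero c, FApp c FZero}" and t_in: "t \<in> lang P (NG k)" for t
  proof -
    obtain \<alpha> where \<alpha>: "(NG k, \<alpha>) \<in> P" "t \<in> lang_pat P \<alpha>"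
      using t_in lang_eq_UN_rhs by blast
    then have "\<alpha> \<notin> Phi k P"
      using t_form Phi_avoids_deep_lambdas[of \<alpha> "Suc M" "shifted k FZero"] M[OF \<alpha>(1)]
      by (auto simp: c_def nf_in_shifted simp del: funpow.simps)
    then show ?thesis using rhs_G_k_cases \<alpha> by blast
  qed
  have in_G_k: "c \<in> lang P (NG k)" "FApp FZero c \<in> lang P (NG k)" "FApp c FZero \<in> lang P (NG k)"
    using c by (auto simp: lang_NG nf_in_FApp_normal_left nf_in_FApp_normal_right lo_step_pure)
  have "c \<notin> lang P (NG 0)"
    using c by (simp add: lang_NG)
  moreover obtain u where "c = FLam u"
    by (simp add: c_def)
  ultimately show "(NG k, rhs_lam) \<in> P" "(NG k, rhs_app_right) \<in> P" "(NG k, rhs_app_left) \<in> P"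
    using witness[OF _ in_G_k(1)] witness[OF _ in_G_k(2)] witness[OF _ in_G_k(3)] FZero_notin_G_k
    by auto
qed

lemma rhs_G_k_eq: "{\<alpha>. (NG k, \<alpha>) \<in> P} = {rhs_lam, rhs_app_right, rhs_app_left} \<union> Phi k P"
  using rhs_G_k_cases self_referencing_rhs_present Phi_regular by blast

lemma G_k_equation: "(1 - fps_X - 2 * fps_X * Linf) * Gi k = (\<Sum>\<gamma>\<in>Phi k P. gf (lang_pat P \<gamma>))"
proof -
  let ?R = "{\<alpha>. (NG k, \<alpha>) \<in> P}"
  let ?\<Sigma> = "\<Sum>\<gamma>\<in>Phi k P. gf (lang_pat P \<gamma>)"
  have "?R \<subseteq> snd ` P"
    by force
  then have fin: "finite ?R"
    using upsilon unfolding upsilon_grammar_def by (metis finite_imageI finite_subset)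
  have unamb: "unambiguous P (NG k)"
    using upsilon unfolding upsilon_grammar_def by blast
  have "Gi k = gf (\<Union>\<alpha>\<in>?R. lang_pat P \<alpha>)"
    using gf_lang_nts(4)[of k] lang_eq_UN_rhs by simp
  also have "\<dots> = (\<Sum>\<alpha>\<in>?R. gf (lang_pat P \<alpha>))"
    using fin unambiguous_rhs_disjoint[OF unamb]
    by (intro gf_UN_disjoint) (auto simp: finite_lang_pat_size)
  also have "\<dots> = gf (lang_pat P rhs_lam) + gf (lang_pat P rhs_app_right)
      + gf (lang_pat P rhs_app_left) + ?\<Sigma>"
    using fin k_pos unfolding rhs_G_k_eq by (subst sum.union_disjoint) (auto simp: Phi_def)
  also have "\<dots> = fps_X * Gi k + fps_X * Linf * Gi k + fps_X * Gi k * Linf + ?\<Sigma>"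
    by (simp add: gf_lang_pat gf_lang_nts Gi_0_eq_Linf)
  finally have "Gi k = fps_X * Gi k + fps_X * Linf * Gi k + fps_X * Gi k * Linf + ?\<Sigma>" .
  then have "Gi k - (fps_X * Gi k + fps_X * Linf * Gi k + fps_X * Gi k * Linf) = ?\<Sigma>"
    by (metis add_diff_cancel_left')
  then show ?thesis
    by (simp add: algebra_simps)
qed

end

theorem mainTheorem3:
  fixes k :: nat and P :: "(nt \<times> nt ftree) set"
  assumes "1 \<le> k" and "upsilon_grammar k P" and "simple_grammar k P"
  shows "(\<forall>\<gamma>\<in>Phi k P. \<exists>\<zeta> \<tau> \<sigma> \<nu> (\<rho> :: nat \<Rightarrow> nat).
            gf (lang_pat P \<gamma>) =
              fps_X ^ \<zeta> * GfT ^ \<tau> * GfS ^ \<sigma> * GfN ^ \<nu> * (\<Prod>i<k. Gi i ^ \<rho> i))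
       \<and> Gi k = inverse (1 - fps_X - 2 * fps_X * Linf) * (\<Sum>\<gamma>\<in>Phi k P. gf (lang_pat P \<gamma>))"
proof -
  interpret simple_upsilon_grammar k P
    using assms by unfold_locales
  have "gf_monomial k (gf (lang_pat P \<gamma>))" if "\<gamma> \<in> Phi k P" for \<gamma>
    unfolding gf_lang_pat using Phi_regular[OF that]
    by (intro pat_gf_monomial[of _ regular_nts]) (auto simp: gf_lang_nts gf_monomial_generators)
  moreover have
    "Gi k = inverse (1 - fps_X - 2 * fps_X * Linf) * (\<Sum>\<gamma>\<in>Phi k P. gf (lang_pat P \<gamma>))"
    unfolding G_k_equation[symmetric] mult.assoc[symmetric]
    by (simp add: inverse_mult_eq_1)
  ultimately show ?thesis
    unfolding gf_monomial_def by blast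
qed

end
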